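(* Let $P$ be a finite poset with a least element $0$ and a greatest element $1$. Then: (a) $P$ is a lattice if and only if $\Delta_\wedge(P)=0$, if and only if $\Delta_\vee(P)=0$. (b) If $\Delta_\wedge(P)\le 1$, then $v_*(x)=|\downarrow x|$ is a (isotone) lower valuation on $P$. (c) If $\Delta_\vee(P)\le 1$, then $v^*(x)=|\uparrow x|$ is an (antitone) lower valuation on $P$.
   Context: For a poset $(P,\le)$ and $x\in P$: $\downarrow x=\{x'\in P: x'\le x\}$, $\uparrow x=\{x'\in P: x\le x'\}$. For $S\subseteq P$, $\mathbf{max}(S)$ and $\mathbf{min}(S)$ denote the sets of maximal and minimal elements of $S$. Define $D_\wedge(x,y)=|\downarrow x\cap\downarrow y|-\max\{|\downarrow z|: z\in\mathbf{max}(\downarrow x\cap\downarrow y)\}$, $\Delta_\wedge(P)=\max_{x,y\in P}D_\wedge(x,y)$; $D_\vee(x,y)=|\uparrow x\cap\uparrow y|-\min\{|\uparrow z|: z\in\mathbf{min}(\uparrow x\cap\uparrow y)\}$, $\Delta_\vee(P)=\max_{x,y\in P}D_\vee(x,y)$. A function $f:P\to\mathbb{R}$ is isotone if $x\le y\Rightarrow f(x)\le f(y)$, antitone if $x\le y\Rightarrow f(x)\ge f(y)$. For a monotone $f$ define $f^-(x,y)=\sup\{f(z):z\in\downarrow x\cap\downarrow y\}$ if $f$ isotone, $\inf\{\cdot\}$ if antitone; $f^+(x,y)=\inf\{f(z):z\in\uparrow x\cap\uparrow y\}$ if $f$ isotone, $\sup\{\cdot\}$ if antitone; with $\inf\emptyset=+\infty$,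 $\sup\emptyset=-\infty$. A lower valuation is either an isotone $v$ with $\downarrow x\cap\downarrow y\neq\emptyset$ for all $x,y$, or an antitone $v$ with $\uparrow x\cap\uparrow y\neq\emptyset$ for all $x,y$, satisfying $v(x)+v(y)\le v^-(x,y)+v^+(x,y)$ for all $x,y\in P$. *)

theory Defs
  imports Main "HOL-Library.Extended_Real"
begin

text \<open>Posets are modelled as types of class order (the whole type is the poset).\<close>

definition down :: "'a::order \<Rightarrow> 'a set" where
  "down x = {x'. x' \<le> x}"

definition up :: "'a::order \<Rightarrow> 'a set" where
  "up x = {x'. x \<le> x'}"

definition maxset :: "'a::order set \<Rightarrow> 'a set" where
  "maxset S = {z \<in> S. \<forall>w \<in> S. z \<le> w \<longrightarrow> w = z}"

definition minset :: "'a::order set \<Rightarrow> 'a set" where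
  "minset S = {z \<in> S. \<forall>w \<in> S. w \<le> z \<longrightarrow> w = z}"

definition D_meet :: "'a::order \<Rightarrow> 'a \<Rightarrow> int" where
  "D_meet x y = int (card (down x \<inter> down y))
     - Max ((\<lambda>z. int (card (down z))) ` maxset (down x \<inter> down y))"

definition Delta_meet :: "'a::order itself \<Rightarrow> int" where
  "Delta_meet (_ :: 'a itself) = Max {D_meet x y | x y :: 'a. True}"

definition D_join :: "'a::order \<Rightarrow> 'a \<Rightarrow> int" where
  "D_join x y = int (card (up x \<inter> up y))
     - Min ((\<lambda>z. int (card (up z))) ` minset (up x \<inter> up y))"

definition Delta_join :: "'a::order itself \<Rightarrow> int" where
  "Delta_join (_ :: 'a itself) = Max {D_join x y | x y :: 'a. True}"

definition is_lattice :: "'a::order itself \<Rightarrow> bool" where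
  "is_lattice (_ :: 'a itself) \<longleftrightarrow>
     (\<forall>x y :: 'a. (\<exists>m. m \<le> x \<and> m \<le> y \<and> (\<forall>z. z \<le> x \<and> z \<le> y \<longrightarrow> z \<le> m))
               \<and> (\<exists>j. x \<le> j \<and> y \<le> j \<and> (\<forall>z. x \<le> z \<and> y \<le> z \<longrightarrow> j \<le> z)))"

text \<open>f^- and f^+ for isotone resp. antitone f, valued in the extended reals
  (Sup {} = -\<infinity>, Inf {} = +\<infinity>).\<close>
definition fminus_iso :: "('a::order \<Rightarrow> real) \<Rightarrow> 'a \<Rightarrow> 'a \<Rightarrow> ereal" where
  "fminus_iso f x y = Sup ((\<lambda>z. ereal (f z)) ` (down x \<inter> down y))"

definition fplus_iso :: "('a::order \<Rightarrow> real) \<Rightarrow> 'a \<Rightarrow> 'a \<Rightarrow> ereal" where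
  "fplus_iso f x y = Inf ((\<lambda>z. ereal (f z)) ` (up x \<inter> up y))"

definition fminus_anti :: "('a::order \<Rightarrow> real) \<Rightarrow> 'a \<Rightarrow> 'a \<Rightarrow> ereal" where
  "fminus_anti f x y = Inf ((\<lambda>z. ereal (f z)) ` (down x \<inter> down y))"

definition fplus_anti :: "('a::order \<Rightarrow> real) \<Rightarrow> 'a \<Rightarrow> 'a \<Rightarrow> ereal" where
  "fplus_anti f x y = Sup ((\<lambda>z. ereal (f z)) ` (up x \<inter> up y))"

definition lower_valuation :: "('a::order \<Rightarrow> real) \<Rightarrow> bool" where
  "lower_valuation v \<longleftrightarrow>
     (mono v \<and> (\<forall>x y :: 'a. down x \<inter> down y \<noteq> {}) \<and>
        (\<forall>x y. ereal (v x) + ereal (v y) \<le> fminus_iso v x y + fplus_iso v x y))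
   \<or> (antimono v \<and> (\<forall>x y :: 'a. up x \<inter> up y \<noteq> {}) \<and>
        (\<forall>x y. ereal (v x) + ereal (v y) \<le> fminus_anti v x y + fplus_anti v x y))"

end

theory Submission
  imports Defs
begin

text \<open>
  All sets involved are finite, so the maximum in the definition of
  D_meet x y is attained at some maximal common lower bound z, and
  D_meet x y = |down x \<inter> down y| - |down z|.  Since down z \<subseteq> down x \<inter> down y,
  D_meet x y \<le> 0 forces down z = down x \<inter> down y, i.e. z is the meet of x and y;
  conversely an existing meet is the unique maximal common lower bound and gives
  D_meet x y = 0.  In a finite poset with a top, existence of all meets implies
  existence of all joins (take a common upper bound with the fewest elements below
  it); dually with a bottom.

  For parts (b) and (c) the valuation inequality is trivial for comparable x, y and
  any monotone v.  For incomparable x, y every common upper bound u has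
  down x \<union> down y \<union> {u} \<subseteq> down u, while D_meet x y \<le> 1 gives a common lower bound z
  with |down x \<inter> down y| \<le> |down z| + 1; inclusion-exclusion for |down x \<union> down y|
  then yields |down x| + |down y| \<le> |down z| + |down u|.  Part (c) is the dual.
\<close>

lemma finite_pair_image: "finite {f x y | (x::'a::finite) (y::'a). True}"
proof -
  have "{f x y | x y. True} = (\<lambda>(x,y). f x y) ` UNIV" by auto
  thus ?thesis by simp
qed

lemma maxset_nonempty:
  fixes S :: "'a::{order,finite} set"
  assumes "S \<noteq> {}" shows "maxset S \<noteq> {}"
  using finite_has_maximal[of S] assms unfolding maxset_def by auto

lemma minset_nonempty:
  fixes S :: "'a::{order,finite} set"
  assumes "S \<noteq> {}" shows "minset S \<noteq> {}"
  using finite_has_minimal[of S] assms unfolding minset_def by auto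

lemma D_meet_attained:
  fixes x y :: "'a::{order,finite}"
  assumes "down x \<inter> down y \<noteq> {}"
  obtains z where "z \<in> maxset (down x \<inter> down y)"
    and "D_meet x y = int (card (down x \<inter> down y)) - int (card (down z))"
proof -
  let ?I = "(\<lambda>z. int (card (down z))) ` maxset (down x \<inter> down y)"
  have "Max ?I \<in> ?I" using maxset_nonempty[OF assms] by (intro Max_in) auto
  then show ?thesis using that unfolding D_meet_def by auto
qed

lemma D_join_attained:
  fixes x y :: "'a::{order,finite}"
  assumes "up x \<inter> up y \<noteq> {}"
  obtains z where "z \<in> minset (up x \<inter> up y)"
    and "D_join x y = int (card (up x \<inter> up y)) - int (card (up z))"
proof -
  let ?I = "(\<lambda>z. int (card (up z))) ` minset (up x \<inter> up y)"
  have "Min ?I \<in> ?I" using minset_nonempty[OF assms] by (intro Min_in) auto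
  then show ?thesis using that unfolding D_join_def by auto
qed

lemma D_meet_le_Delta: "D_meet (x::'a::{order,finite}) y \<le> Delta_meet TYPE('a)"
  unfolding Delta_meet_def by (rule Max_ge[OF finite_pair_image]) auto

lemma D_join_le_Delta: "D_join (x::'a::{order,finite}) y \<le> Delta_join TYPE('a)"
  unfolding Delta_join_def by (rule Max_ge[OF finite_pair_image]) auto

lemma Delta_meet_eq_0:
  assumes "\<And>x y::'a::{order,finite}. D_meet x y = 0"
  shows "Delta_meet TYPE('a) = 0"
proof -
  have "{D_meet x y | x y :: 'a. True} = {0}" using assms by auto
  thus ?thesis unfolding Delta_meet_def by simp
qed

lemma Delta_join_eq_0:
  assumes "\<And>x y::'a::{order,finite}. D_join x y = 0"
  shows "Delta_join TYPE('a) = 0"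
proof -
  have "{D_join x y | x y :: 'a. True} = {0}" using assms by auto
  thus ?thesis unfolding Delta_join_def by simp
qed

definition has_meet :: "'a::order \<Rightarrow> 'a \<Rightarrow> bool" where
  "has_meet x y \<longleftrightarrow> (\<exists>m. m \<le> x \<and> m \<le> y \<and> (\<forall>z. z \<le> x \<and> z \<le> y \<longrightarrow> z \<le> m))"

definition has_join :: "'a::order \<Rightarrow> 'a \<Rightarrow> bool" where
  "has_join x y \<longleftrightarrow> (\<exists>j. x \<le> j \<and> y \<le> j \<and> (\<forall>z. x \<le> z \<and> y \<le> z \<longrightarrow> j \<le> z))"

lemma is_lattice_iff:
  "is_lattice TYPE('a::order) \<longleftrightarrow> (\<forall>x y::'a. has_meet x y \<and> has_join x y)"
  unfolding is_lattice_def has_meet_def has_join_def by blast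

lemma has_meet_if_D_meet_nonpos:
  fixes x y :: "'a::{order,finite}"
  assumes ne: "down x \<inter> down y \<noteq> {}" and D: "D_meet x y \<le> 0"
  shows "has_meet x y"
proof -
  obtain z where z: "z \<in> maxset (down x \<inter> down y)"
     and Dz: "D_meet x y = int (card (down x \<inter> down y)) - int (card (down z))"
    using D_meet_attained[OF ne] by blast
  have zxy: "z \<le> x" "z \<le> y" using z unfolding maxset_def down_def by auto
  have "down z \<subseteq> down x \<inter> down y" using zxy unfolding down_def by auto
  moreover have "card (down x \<inter> down y) \<le> card (down z)" using Dz D by simp
  ultimately have "down z = down x \<inter> down y" by (intro card_seteq) auto
  then show ?thesis unfolding has_meet_def using zxy by (auto simp: down_def)
qed

lemma has_join_if_D_join_nonpos:
  fixes x y :: "'a::{order,finite}"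
  assumes ne: "up x \<inter> up y \<noteq> {}" and D: "D_join x y \<le> 0"
  shows "has_join x y"
proof -
  obtain z where z: "z \<in> minset (up x \<inter> up y)"
     and Dz: "D_join x y = int (card (up x \<inter> up y)) - int (card (up z))"
    using D_join_attained[OF ne] by blast
  have zxy: "x \<le> z" "y \<le> z" using z unfolding minset_def up_def by auto
  have "up z \<subseteq> up x \<inter> up y" using zxy unfolding up_def by auto
  moreover have "card (up x \<inter> up y) \<le> card (up z)" using Dz D by simp
  ultimately have "up z = up x \<inter> up y" by (intro card_seteq) auto
  then show ?thesis unfolding has_join_def using zxy by (auto simp: up_def)
qed

text \<open>A meet is the unique maximal common lower bound, hence D_meet vanishes.\<close>
lemma D_meet_eq_0_if_has_meet:
  fixes x y :: "'a::{order,finite}"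
  assumes "has_meet x y"
  shows "D_meet x y = 0"
proof -
  obtain m where m: "m \<le> x" "m \<le> y" "\<forall>z. z \<le> x \<and> z \<le> y \<longrightarrow> z \<le> m"
    using assms unfolding has_meet_def by blast
  have down_m: "down x \<inter> down y = down m" using m unfolding down_def by (auto intro: order_trans)
  then obtain z where z: "z \<in> maxset (down x \<inter> down y)"
     and Dz: "D_meet x y = int (card (down x \<inter> down y)) - int (card (down z))"
    using D_meet_attained[of x y] unfolding down_def by auto
  have "z = m" using z m unfolding maxset_def down_def by (auto intro: order.antisym)
  then show ?thesis using Dz down_m by simp
qed

lemma D_join_eq_0_if_has_join:
  fixes x y :: "'a::{order,finite}"
  assumes "has_join x y"
  shows "D_join x y = 0"
proof -
  obtain m where m: "x \<le> m" "y \<le> m" "\<forall>z. x \<le> z \<and> y \<le> z \<longrightarrow> m \<le> z"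
    using assms unfolding has_join_def by blast
  have up_m: "up x \<inter> up y = up m" using m unfolding up_def by (auto intro: order_trans)
  then obtain z where z: "z \<in> minset (up x \<inter> up y)"
     and Dz: "D_join x y = int (card (up x \<inter> up y)) - int (card (up z))"
    using D_join_attained[of x y] unfolding up_def by auto
  have "z = m" using z m unfolding minset_def up_def by (auto intro: order.antisym)
  then show ?thesis using Dz up_m by simp
qed

text \<open>In a finite poset with a top, all meets give all joins: a common upper bound
  with the fewest elements below it lies below every other common upper bound.\<close>
lemma has_join_if_all_meets:
  fixes top x y :: "'a::{order,finite}"
  assumes greatest: "\<forall>x. x \<le> top" and meets: "\<forall>x y::'a. has_meet x y"
  shows "has_join x y"
proof -
  let ?U = "{u. x \<le> u \<and> y \<le> u}"
  have "top \<in> ?U" using greatest by auto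
  then obtain j where j: "j \<in> ?U" and j_least: "\<forall>u\<in>?U. card (down j) \<le> card (down u)"
    using ex_has_least_nat[of "\<lambda>u. u \<in> ?U" top "\<lambda>u. card (down u)"] by blast
  have "j \<le> u" if u: "u \<in> ?U" for u
  proof -
    obtain m where m: "m \<le> j" "m \<le> u" "\<forall>z. z \<le> j \<and> z \<le> u \<longrightarrow> z \<le> m"
      using meets unfolding has_meet_def by blast
    have "m \<in> ?U" using m(3) j u by auto
    then have "card (down j) \<le> card (down m)" using j_least by blast
    moreover have "down m \<subseteq> down j" using m(1) unfolding down_def by auto
    ultimately have "down m = down j" by (intro card_seteq) auto
    then have "j \<le> m" unfolding down_def by auto
    then show ?thesis using m(2) by simp
  qed
  then show ?thesis unfolding has_join_def using j by blast
qed

lemma has_meet_if_all_joins: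
  fixes bot x y :: "'a::{order,finite}"
  assumes least: "\<forall>x. bot \<le> x" and joins: "\<forall>x y::'a. has_join x y"
  shows "has_meet x y"
proof -
  let ?L = "{l. l \<le> x \<and> l \<le> y}"
  have "bot \<in> ?L" using least by auto
  then obtain m where m: "m \<in> ?L" and m_least: "\<forall>l\<in>?L. card (up m) \<le> card (up l)"
    using ex_has_least_nat[of "\<lambda>l. l \<in> ?L" bot "\<lambda>l. card (up l)"] by blast
  have "l \<le> m" if l: "l \<in> ?L" for l
  proof -
    obtain j where j: "m \<le> j" "l \<le> j" "\<forall>z. m \<le> z \<and> l \<le> z \<longrightarrow> j \<le> z"
      using joins unfolding has_join_def by blast
    have "j \<in> ?L" using j(3) m l by auto
    then have "card (up m) \<le> card (up j)" using m_least by blast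
    moreover have "up j \<subseteq> up m" using j(1) unfolding up_def by auto
    ultimately have "up j = up m" by (intro card_seteq) auto
    then have "j \<le> m" unfolding up_def by auto
    then show ?thesis using j(2) by simp
  qed
  then show ?thesis unfolding has_meet_def using m by blast
qed

theorem lattice_iff_Delta_meet_eq_0:
  fixes bot top :: "'a::{order,finite}"
  assumes least: "\<forall>x. bot \<le> x" and greatest: "\<forall>x. x \<le> top"
  shows "is_lattice TYPE('a) \<longleftrightarrow> Delta_meet TYPE('a) = 0"
proof
  assume "is_lattice TYPE('a)"
  then show "Delta_meet TYPE('a) = 0"
    by (intro Delta_meet_eq_0 D_meet_eq_0_if_has_meet) (simp add: is_lattice_iff)
next
  assume D: "Delta_meet TYPE('a) = 0"
  have "has_meet x y" for x y :: 'a
  proof (rule has_meet_if_D_meet_nonpos)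
    show "down x \<inter> down y \<noteq> {}" using least unfolding down_def by auto
    show "D_meet x y \<le> 0" using D_meet_le_Delta[of x y] D by simp
  qed
  then show "is_lattice TYPE('a)"
    unfolding is_lattice_iff using has_join_if_all_meets[OF greatest] by blast
qed

theorem lattice_iff_Delta_join_eq_0:
  fixes bot top :: "'a::{order,finite}"
  assumes least: "\<forall>x. bot \<le> x" and greatest: "\<forall>x. x \<le> top"
  shows "is_lattice TYPE('a) \<longleftrightarrow> Delta_join TYPE('a) = 0"
proof
  assume "is_lattice TYPE('a)"
  then show "Delta_join TYPE('a) = 0"
    by (intro Delta_join_eq_0 D_join_eq_0_if_has_join) (simp add: is_lattice_iff)
next
  assume D: "Delta_join TYPE('a) = 0"
  have "has_join x y" for x y :: 'a
  proof (rule has_join_if_D_join_nonpos)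
    show "up x \<inter> up y \<noteq> {}" using greatest unfolding up_def by auto
    show "D_join x y \<le> 0" using D_join_le_Delta[of x y] D by simp
  qed
  then show "is_lattice TYPE('a)"
    unfolding is_lattice_iff using has_meet_if_all_joins[OF least] by blast
qed

lemma fminus_fplus_commute:
  "fminus_iso f x y = fminus_iso f y x" "fplus_iso f x y = fplus_iso f y x"
  "fminus_anti f x y = fminus_anti f y x" "fplus_anti f x y = fplus_anti f y x"
  unfolding fminus_iso_def fplus_iso_def fminus_anti_def fplus_anti_def
  by (simp_all add: Int_commute)

text \<open>For comparable elements any isotone function satisfies the lower valuation
  inequality: x itself is a common lower bound and y lies below every common upper bound.\<close>
lemma iso_valuation_ineq_comparable:
  fixes v :: "'a::order \<Rightarrow> real"
  assumes "mono v" and "x \<le> y"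
  shows "ereal (v x) + ereal (v y) \<le> fminus_iso v x y + fplus_iso v x y"
proof (rule add_mono)
  show "ereal (v x) \<le> fminus_iso v x y" unfolding fminus_iso_def
    by (rule SUP_upper) (use assms(2) in \<open>auto simp: down_def\<close>)
  show "ereal (v y) \<le> fplus_iso v x y" unfolding fplus_iso_def
    by (rule INF_greatest) (use assms in \<open>auto simp: up_def mono_def\<close>)
qed

lemma anti_valuation_ineq_comparable:
  fixes v :: "'a::order \<Rightarrow> real"
  assumes "antimono v" and "x \<le> y"
  shows "ereal (v x) + ereal (v y) \<le> fminus_anti v x y + fplus_anti v x y"
proof (rule add_mono)
  show "ereal (v x) \<le> fminus_anti v x y" unfolding fminus_anti_def
    by (rule INF_greatest) (use assms in \<open>auto simp: down_def antimono_def\<close>)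
  show "ereal (v y) \<le> fplus_anti v x y" unfolding fplus_anti_def
    by (rule SUP_upper) (use assms(2) in \<open>auto simp: up_def\<close>)
qed

text \<open>A common upper bound of incomparable x, y lies strictly above everything
  in down x \<union> down y.\<close>
lemma card_down_common_upper_bound:
  fixes x y u :: "'a::{order,finite}"
  assumes "x \<le> u" "y \<le> u" and "\<not> x \<le> y" "\<not> y \<le> x"
  shows "card (down x \<union> down y) + 1 \<le> card (down u)"
proof -
  have "u \<notin> down x \<union> down y" using assms unfolding down_def by auto
  moreover have "insert u (down x \<union> down y) \<subseteq> down u"
    using assms(1,2) unfolding down_def by (auto intro: order_trans)
  then have "card (insert u (down x \<union> down y)) \<le> card (down u)" by (intro card_mono) auto
  ultimately show ?thesis by simp
qed

lemma card_up_common_lower_bound: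
  fixes x y l :: "'a::{order,finite}"
  assumes "l \<le> x" "l \<le> y" and "\<not> x \<le> y" "\<not> y \<le> x"
  shows "card (up x \<union> up y) + 1 \<le> card (up l)"
proof -
  have "l \<notin> up x \<union> up y" using assms unfolding up_def by auto
  moreover have "insert l (up x \<union> up y) \<subseteq> up l"
    using assms(1,2) unfolding up_def by (auto intro: order_trans)
  then have "card (insert l (up x \<union> up y)) \<le> card (up l)" by (intro card_mono) auto
  ultimately show ?thesis by simp
qed

lemma ereal_sum_le_via_nat_bounds:
  fixes m n a b :: nat and A B :: ereal
  assumes "m + n \<le> a + b" "ereal (real a) \<le> A" "ereal (real b) \<le> B"
  shows "ereal (real m) + ereal (real n) \<le> A + B"
proof -
  have "ereal (real m) + ereal (real n) \<le> ereal (real a) + ereal (real b)"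
    using assms(1) by simp
  also have "\<dots> \<le> A + B" using assms(2,3) by (rule add_mono)
  finally show ?thesis .
qed

lemma card_down_valuation_ineq_incomparable:
  fixes x y :: "'a::{order,finite}"
  assumes ne: "down x \<inter> down y \<noteq> {}" and D: "D_meet x y \<le> 1"
    and incomp: "\<not> x \<le> y" "\<not> y \<le> x"
  shows "ereal (real (card (down x))) + ereal (real (card (down y)))
           \<le> fminus_iso (\<lambda>x. real (card (down x))) x y + fplus_iso (\<lambda>x. real (card (down x))) x y"
proof -
  let ?v = "\<lambda>x::'a. real (card (down x))"
  obtain z where z: "z \<in> maxset (down x \<inter> down y)"
     and Dz: "D_meet x y = int (card (down x \<inter> down y)) - int (card (down z))"
    using D_meet_attained[OF ne] by blast
  have "card (down x) + card (down y) = card (down x \<union> down y) + card (down x \<inter> down y)"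
    by (rule card_Un_Int) auto
  also have "\<dots> \<le> card (down z) + (card (down x \<union> down y) + 1)" using Dz D by simp
  finally have sum: "card (down x) + card (down y) \<le> card (down z) + (card (down x \<union> down y) + 1)" .
  have "ereal (?v z) \<le> fminus_iso ?v x y" unfolding fminus_iso_def
    by (rule SUP_upper) (use z in \<open>auto simp: maxset_def\<close>)
  moreover have "ereal (real (card (down x \<union> down y) + 1)) \<le> fplus_iso ?v x y"
    unfolding fplus_iso_def
  proof (rule INF_greatest)
    fix u assume "u \<in> up x \<inter> up y"
    then have "card (down x \<union> down y) + 1 \<le> card (down u)"
      using card_down_common_upper_bound incomp unfolding up_def by blast
    then show "ereal (real (card (down x \<union> down y) + 1)) \<le> ereal (?v u)" by simp
  qed
  ultimately show ?thesis by (intro ereal_sum_le_via_nat_bounds[OF sum]) simp_all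
qed

lemma card_up_valuation_ineq_incomparable:
  fixes x y :: "'a::{order,finite}"
  assumes ne: "up x \<inter> up y \<noteq> {}" and D: "D_join x y \<le> 1"
    and incomp: "\<not> x \<le> y" "\<not> y \<le> x"
  shows "ereal (real (card (up x))) + ereal (real (card (up y)))
           \<le> fminus_anti (\<lambda>x. real (card (up x))) x y + fplus_anti (\<lambda>x. real (card (up x))) x y"
proof -
  let ?v = "\<lambda>x::'a. real (card (up x))"
  obtain z where z: "z \<in> minset (up x \<inter> up y)"
     and Dz: "D_join x y = int (card (up x \<inter> up y)) - int (card (up z))"
    using D_join_attained[OF ne] by blast
  have "card (up x) + card (up y) = card (up x \<union> up y) + card (up x \<inter> up y)"
    by (rule card_Un_Int) auto
  also have "\<dots> \<le> (card (up x \<union> up y) + 1) + card (up z)" using Dz D by simp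
  finally have sum: "card (up x) + card (up y) \<le> (card (up x \<union> up y) + 1) + card (up z)" .
  have "ereal (real (card (up x \<union> up y) + 1)) \<le> fminus_anti ?v x y"
    unfolding fminus_anti_def
  proof (rule INF_greatest)
    fix l assume "l \<in> down x \<inter> down y"
    then have "card (up x \<union> up y) + 1 \<le> card (up l)"
      using card_up_common_lower_bound incomp unfolding down_def by blast
    then show "ereal (real (card (up x \<union> up y) + 1)) \<le> ereal (?v l)" by simp
  qed
  moreover have "ereal (?v z) \<le> fplus_anti ?v x y" unfolding fplus_anti_def
    by (rule SUP_upper) (use z in \<open>auto simp: minset_def\<close>)
  ultimately show ?thesis by (intro ereal_sum_le_via_nat_bounds[OF sum]) simp_all
qed

lemma mono_card_down: "mono (\<lambda>x::'a::{order,finite}. real (card (down x)))"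
  by (rule monoI) (auto intro!: card_mono simp: down_def intro: order_trans)

lemma antimono_card_up: "antimono (\<lambda>x::'a::{order,finite}. real (card (up x)))"
  by (rule antimonoI) (auto intro!: card_mono simp: up_def intro: order_trans)

theorem card_down_lower_valuation:
  fixes bot :: "'a::{order,finite}"
  assumes least: "\<forall>x. bot \<le> x" and D: "Delta_meet TYPE('a) \<le> 1"
  shows "lower_valuation (\<lambda>x::'a. real (card (down x)))"
proof -
  let ?v = "\<lambda>x::'a. real (card (down x))"
  have ne: "down x \<inter> down y \<noteq> {}" for x y :: 'a using least unfolding down_def by auto
  have "ereal (?v x) + ereal (?v y) \<le> fminus_iso ?v x y + fplus_iso ?v x y" for x y :: 'a
  proof (cases "x \<le> y \<or> y \<le> x")
    case True
    then show ?thesis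
      using iso_valuation_ineq_comparable[OF mono_card_down] fminus_fplus_commute(1,2)
      by (metis add.commute)
  next
    case False
    then show ?thesis
      using card_down_valuation_ineq_incomparable[OF ne] D_meet_le_Delta[of x y] D by simp
  qed
  then show ?thesis using mono_card_down ne unfolding lower_valuation_def by blast
qed

theorem card_up_lower_valuation:
  fixes top :: "'a::{order,finite}"
  assumes greatest: "\<forall>x. x \<le> top" and D: "Delta_join TYPE('a) \<le> 1"
  shows "lower_valuation (\<lambda>x::'a. real (card (up x)))"
proof -
  let ?v = "\<lambda>x::'a. real (card (up x))"
  have ne: "up x \<inter> up y \<noteq> {}" for x y :: 'a using greatest unfolding up_def by auto
  have "ereal (?v x) + ereal (?v y) \<le> fminus_anti ?v x y + fplus_anti ?v x y" for x y :: 'a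
  proof (cases "x \<le> y \<or> y \<le> x")
    case True
    then show ?thesis
      using anti_valuation_ineq_comparable[OF antimono_card_up] fminus_fplus_commute(3,4)
      by (metis add.commute)
  next
    case False
    then show ?thesis
      using card_up_valuation_ineq_incomparable[OF ne] D_join_le_Delta[of x y] D by simp
  qed
  then show ?thesis using antimono_card_up ne unfolding lower_valuation_def by blast
qed

theorem mainTheorem8:
  fixes bot top :: "'a::{order, finite}"
  assumes least: "\<forall>x. bot \<le> x"
    and greatest: "\<forall>x. x \<le> top"
  shows "(is_lattice TYPE('a) \<longleftrightarrow> Delta_meet TYPE('a) = 0)
       \<and> (is_lattice TYPE('a) \<longleftrightarrow> Delta_join TYPE('a) = 0)
       \<and> (Delta_meet TYPE('a) \<le> 1 \<longrightarrow>
            mono (\<lambda>x::'a. real (card (down x))) \<and> lower_valuation (\<lambda>x::'a. real (card (down x))))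
       \<and> (Delta_join TYPE('a) \<le> 1 \<longrightarrow>
            antimono (\<lambda>x::'a. real (card (up x))) \<and> lower_valuation (\<lambda>x::'a. real (card (up x))))"
  using lattice_iff_Delta_meet_eq_0[OF least greatest]
    lattice_iff_Delta_join_eq_0[OF least greatest]
    mono_card_down card_down_lower_valuation[OF least]
    antimono_card_up card_up_lower_valuation[OF greatest]
  by blast

end
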